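(* Let $\mathbb{G}$ and $\mathbb{H}$ be finite loopless graphs that are not 3-colorable, let $e=\{g,g'\}$ be a critical edge of $\mathbb{G}$ and $f=\{h,h'\}$ a critical edge of $\mathbb{H}$. Let $\mathbb{N}$ be a finite loopless graph with four distinct vertices $x,x',y,y'$ such that $\{x,x'\}$ and $\{y,y'\}$ are non-edges, and with an edge $d$, such that: (N1) every homomorphism $c:\mathbb{N}\to\mathbb{K}_3$ satisfies exactly one of $c(x)\neq c(x')$ and $c(y)\neq c(y')$; (N2) every map $c:\{x,x',y,y'\}\to\mathbb{K}_3$ satisfying exactly one of $c(x)\neq c(x')$, $c(y)\ne c(y')$ extends to a homomorphism $\mathbb{N}\to\mathbb{K}_3$; (N3) every map $c:\{x,x',y,y'\}\to\mathbb{K}_3$ with $c(x)=c(x')$ and $c(y)=c(y')$ extends to a homomorphism $\mathbb{N}-d\to\mathbb{K}_3$. Let $\mathbb{W}=(\mathbb{G},e)\oplus(\mathbb{H},f)$ be the graph obtained from the disjoint union of $\mathbb{G}-e$, $\mathbb{H}-f$ and $\mathbb{N}$ by identifying $g$ with $x$, $g'$ with $x'$, $h$ with $y$, and $h'$ with $y'$. Then: (1) $\mathbb{W}$ is not 3-colorable; (2) $d$ is a critical edge of $\mathbb{W}$; (3) $\Sigma_{\mathbb{W}}$ is implied by $\Sigma_{\mathbb{G}}$ and is implied by $\Sigma_{\mathbb{H}}$.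
   Context: A graph is a structure $(V,E)$ with a single symmetric binary relation $E$; $\mathbb{K}_3$ is the complete loopless graph on three vertices and a graph is 3-colorable if it admits a homomorphism to $\mathbb{K}_3$. For an edge $e$ of $\mathbb{M}$, $\mathbb{M}-e$ is the graph obtained by removing $e$; an edge $e$ of $\mathbb{M}$ is critical if $\mathbb{M}-e$ is 3-colorable. A clone on a set is a set of finitary operations containing all projections and closed under composition. A height 1 condition is a finite set of identities $f(x_{\pi(1)},\dots,x_{\pi(n)})\approx g(x_{\rho(1)},\dots,x_{\rho(m)})$ (function symbols, arbitrary maps $\pi,\rho$, universally quantified); a clone satisfies it if its symbols can be assigned functions of the clone of the right arities making all identities true; $\Sigma$ implies $\Sigma'$ if every clone satisfying $\Sigma$ satisfies $\Sigma'$. For a finite graph $\mathbb{G}=(V,E)$, $\Sigma_{\mathbb{G}}$ is the height 1 condition with a ternary symbol $f_v$ for each $v\in V$, a $6$-ary symbol $g_{(u,v)}$ for each $(u,v)\in E$, and, for each $(u,v)\in E$, the identities $f_u(x,y,z)\approx g_{(u,v)}(x,y,x,z,y,z)$ and $f_v(x,y,z)\approx g_{(u,v)}(y,x,z,x,z,y)$. *)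

theory Defs
  imports Main
begin

text \<open>A graph is given by a vertex set V and a symmetric edge relation E (a set of
ordered pairs, containing both orientations of every edge).\<close>

definition finite_loopless_graph :: "'a set \<Rightarrow> ('a \<times> 'a) set \<Rightarrow> bool" where
  "finite_loopless_graph V E \<longleftrightarrow> finite V \<and> E \<subseteq> V \<times> V \<and> sym E \<and> (\<forall>v. (v, v) \<notin> E)"

definition graph_hom :: "('a \<times> 'a) set \<Rightarrow> 'b set \<Rightarrow> ('b \<times> 'b) set \<Rightarrow> ('a \<Rightarrow> 'b) \<Rightarrow> 'a set \<Rightarrow> bool" where
  "graph_hom E V' E' c V \<longleftrightarrow> (\<forall>v\<in>V. c v \<in> V') \<and> (\<forall>(u, v)\<in>E. (c u, c v) \<in> E')"

definition K3_V :: "nat set" where "K3_V = {0, 1, 2}"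
definition K3_E :: "(nat \<times> nat) set" where "K3_E = {(i, j). i \<in> K3_V \<and> j \<in> K3_V \<and> i \<noteq> j}"

definition hom_K3 :: "'a set \<Rightarrow> ('a \<times> 'a) set \<Rightarrow> ('a \<Rightarrow> nat) \<Rightarrow> bool" where
  "hom_K3 V E c \<longleftrightarrow> graph_hom E K3_V K3_E c V"

definition three_colorable :: "'a set \<Rightarrow> ('a \<times> 'a) set \<Rightarrow> bool" where
  "three_colorable V E \<longleftrightarrow> (\<exists>c. hom_K3 V E c)"

definition remove_edge :: "('a \<times> 'a) set \<Rightarrow> 'a \<Rightarrow> 'a \<Rightarrow> ('a \<times> 'a) set" where
  "remove_edge E u v = E - {(u, v), (v, u)}"

definition critical_edge :: "'a set \<Rightarrow> ('a \<times> 'a) set \<Rightarrow> 'a \<Rightarrow> 'a \<Rightarrow> bool" where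
  "critical_edge V E u v \<longleftrightarrow> (u, v) \<in> E \<and> three_colorable V (remove_edge E u v)"

text \<open>A finitary operation on A is represented by its arity n and a function on lists,
only its values on lists over A of length n being relevant.\<close>

type_synonym 'c operation = "nat \<times> ('c list \<Rightarrow> 'c)"

definition tuples :: "'c set \<Rightarrow> nat \<Rightarrow> 'c list set" where
  "tuples A n = {xs. set xs \<subseteq> A \<and> length xs = n}"

definition is_op :: "'c set \<Rightarrow> nat \<Rightarrow> ('c list \<Rightarrow> 'c) \<Rightarrow> bool" where
  "is_op A n f \<longleftrightarrow> (\<forall>xs\<in>tuples A n. f xs \<in> A)"

definition clone :: "'c set \<Rightarrow> 'c operation set \<Rightarrow> bool" where
  "clone A C \<longleftrightarrow>
     (\<forall>(n, f)\<in>C. is_op A n f) \<and>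
     (\<forall>n i. i < n \<longrightarrow> (\<exists>p. (n, p) \<in> C \<and> (\<forall>xs\<in>tuples A n. p xs = xs ! i))) \<and>
     (\<forall>n f m gs. (n, f) \<in> C \<longrightarrow> length gs = n \<longrightarrow> (\<forall>g\<in>set gs. (m, g) \<in> C) \<longrightarrow>
        (\<exists>h. (m, h) \<in> C \<and> (\<forall>xs\<in>tuples A m. h xs = f (map (\<lambda>g. g xs) gs))))"

text \<open>A height 1 condition: a set of function symbols, their arities, and a set of
identities (s1, pi, s2, rho) meaning s1(x_pi(1),...,x_pi(n)) = s2(x_rho(1),...,x_rho(m)),
variables being natural numbers.\<close>

type_synonym 's h1cond = "'s set \<times> ('s \<Rightarrow> nat) \<times> ('s \<times> nat list \<times> 's \<times> nat list) set"

definition h1_sat :: "'c set \<Rightarrow> 'c operation set \<Rightarrow> 's h1cond \<Rightarrow> bool" where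
  "h1_sat A C \<Sigma> \<longleftrightarrow> (case \<Sigma> of (S, ar, Ids) \<Rightarrow>
     (\<exists>F. (\<forall>s\<in>S. (ar s, F s) \<in> C) \<and>
          (\<forall>(s1, \<pi>, s2, \<rho>)\<in>Ids. \<forall>v. (\<forall>i. v i \<in> A) \<longrightarrow> F s1 (map v \<pi>) = F s2 (map v \<rho>))))"

text \<open>Implication of height 1 conditions, over clones on sets of elements of type 'c;
since the theorem is stated with 'c a free (hence universally quantified) type variable,
this expresses implication over clones on arbitrary sets.\<close>
definition h1_implies :: "'c itself \<Rightarrow> 's h1cond \<Rightarrow> 't h1cond \<Rightarrow> bool" where
  "h1_implies _ \<Sigma> \<Sigma>' \<longleftrightarrow> (\<forall>(A :: 'c set) C. clone A C \<longrightarrow> h1_sat A C \<Sigma> \<longrightarrow> h1_sat A C \<Sigma>')"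

text \<open>Sigma_G: symbol Inl v is the ternary f_v, symbol Inr (u,v) the 6-ary g_(u,v);
variables x, y, z are 0, 1, 2.\<close>
definition Sigma_graph :: "'a set \<Rightarrow> ('a \<times> 'a) set \<Rightarrow> ('a + ('a \<times> 'a)) h1cond" where
  "Sigma_graph V E =
    (Inl ` V \<union> Inr ` E,
     (\<lambda>s. case s of Inl _ \<Rightarrow> 3 | Inr _ \<Rightarrow> 6),
     {(Inl u, [0, 1, 2], Inr (u, v), [0, 1, 0, 2, 1, 2]) | u v. (u, v) \<in> E} \<union>
     {(Inl v, [0, 1, 2], Inr (u, v), [1, 0, 2, 0, 2, 1]) | u v. (u, v) \<in> E})"

text \<open>Vertices of W live in 'a + 'b + 'n; the vertices x, x', y, y' of N are identified
with g, g' (of G) and h, h' (of H) respectively.\<close>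

definition embN :: "'a \<Rightarrow> 'a \<Rightarrow> 'b \<Rightarrow> 'b \<Rightarrow> 'n \<Rightarrow> 'n \<Rightarrow> 'n \<Rightarrow> 'n \<Rightarrow> 'n \<Rightarrow> 'a + 'b + 'n" where
  "embN g g' h h' x x' y y' v =
     (if v = x then Inl g else if v = x' then Inl g'
      else if v = y then Inr (Inl h) else if v = y' then Inr (Inl h')
      else Inr (Inr v))"

definition glue_V ::
  "'a set \<Rightarrow> 'b set \<Rightarrow> 'n set \<Rightarrow> 'a \<Rightarrow> 'a \<Rightarrow> 'b \<Rightarrow> 'b \<Rightarrow> 'n \<Rightarrow> 'n \<Rightarrow> 'n \<Rightarrow> 'n \<Rightarrow> ('a + 'b + 'n) set" where
  "glue_V VG VH VN g g' h h' x x' y y' =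
     Inl ` VG \<union> (\<lambda>v. Inr (Inl v)) ` VH \<union> embN g g' h h' x x' y y' ` VN"

definition glue_E ::
  "('a \<times> 'a) set \<Rightarrow> ('b \<times> 'b) set \<Rightarrow> ('n \<times> 'n) set \<Rightarrow> 'a \<Rightarrow> 'a \<Rightarrow> 'b \<Rightarrow> 'b \<Rightarrow> 'n \<Rightarrow> 'n \<Rightarrow> 'n \<Rightarrow> 'n
     \<Rightarrow> (('a + 'b + 'n) \<times> ('a + 'b + 'n)) set" where
  "glue_E EG EH EN g g' h h' x x' y y' =
     (\<lambda>(u, v). (Inl u, Inl v)) ` remove_edge EG g g' \<union>
     (\<lambda>(u, v). (Inr (Inl u), Inr (Inl v))) ` remove_edge EH h h' \<union>
     (\<lambda>(u, v). (embN g g' h h' x x' y y' u, embN g g' h h' x x' y y' v)) ` EN"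

end

theory Submission
  imports Defs
begin

(* (1) A 3-colouring of W restricts to colourings of G - e and H - f; as G and H are not
   3-colourable these identify the ends of e and f, so x, x' and y, y' get equal colours,
   contradicting (N1). (2) Colourings of G - e and H - f identifying the ends of e and f glue
   with a colouring of N - d provided by (N3) to a colouring of W - d.
   (3) Sigma_G holds in a clone iff G maps homomorphically to the graph of ternary operations
   in which f_u and f_v are adjacent when some 6-ary g satisfies the identities of Sigma_G for
   them. A 6-ary s maps the sixth power of K3 into this graph by a \<mapsto> s(x_(a 0), ..., x_(a 5)),
   and a solution of Sigma_G sends e to the image of the edge (src_pattern, tgt_pattern) for
   s = g_e. Using (N2) coordinatewise and a colouring of H - f, W maps to G glued with the
   sixth power of K3 along these two edges, hence into the graph of ternary operations. *)

lemma K3_V_iff: "k \<in> K3_V \<longleftrightarrow> k < 3"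
  by (auto simp: K3_V_def)

lemma K3_E_iff: "(a, b) \<in> K3_E \<longleftrightarrow> a < 3 \<and> b < 3 \<and> a \<noteq> b"
  by (simp add: K3_E_def K3_V_iff)

definition minor :: "nat \<Rightarrow> ('c list \<Rightarrow> 'c) \<Rightarrow> (nat \<Rightarrow> nat) \<Rightarrow> 'c list \<Rightarrow> 'c" where
  "minor n f \<sigma> xs = f (map (\<lambda>i. xs ! \<sigma> i) [0..<n])"

lemma minor_cong: "\<forall>i<n. \<sigma> i = \<sigma>' i \<Longrightarrow> minor n f \<sigma> = minor n f \<sigma>'"
  by (auto simp: minor_def fun_eq_iff intro!: arg_cong[where f = f])

lemma minor_minor:
  assumes "\<forall>i<n. \<sigma> i < m"
  shows "minor m (minor n f \<sigma>) \<rho> = minor n f (\<rho> \<circ> \<sigma>)"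
  using assms by (auto simp: minor_def fun_eq_iff intro!: arg_cong[where f = f])

lemma map_nth_in_tuples:
  "xs \<in> tuples A m \<Longrightarrow> \<forall>i<n. \<sigma> i < m \<Longrightarrow> map (\<lambda>i. xs ! \<sigma> i) [0..<n] \<in> tuples A n"
  by (auto simp: tuples_def)

lemma minor_of_minor_on_tuples:
  assumes "\<forall>ys\<in>tuples A m. h ys = minor n f \<sigma> ys" "\<forall>i<n. \<sigma> i < m"
    and "\<forall>j<m. \<rho> j < l" "xs \<in> tuples A l"
  shows "minor m h \<rho> xs = minor n f (\<rho> \<circ> \<sigma>) xs"
proof -
  have "map (\<lambda>j. xs ! \<rho> j) [0..<m] \<in> tuples A m"
    using assms(4,3) by (rule map_nth_in_tuples)
  then have "minor m h \<rho> xs = minor m (minor n f \<sigma>) \<rho> xs"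
    using assms(1) by (simp add: minor_def[of m])
  also have "\<dots> = minor n f (\<rho> \<circ> \<sigma>) xs"
    using assms(2) by (simp add: minor_minor)
  finally show ?thesis .
qed

lemma clone_minor:
  assumes "clone A C" and "(n, f) \<in> C" and "\<forall>i<n. \<sigma> i < m"
  shows "\<exists>h. (m, h) \<in> C \<and> (\<forall>xs\<in>tuples A m. h xs = minor n f \<sigma> xs)"
proof -
  have "\<forall>i<n. \<exists>p. (m, p) \<in> C \<and> (\<forall>xs\<in>tuples A m. p xs = xs ! \<sigma> i)"
    using assms(1,3) by (simp add: clone_def)
  then obtain p where p: "\<forall>i<n. (m, p i) \<in> C \<and> (\<forall>xs\<in>tuples A m. p i xs = xs ! \<sigma> i)"
    by metis
  have "length (map p [0..<n]) = n" "\<forall>g\<in>set (map p [0..<n]). (m, g) \<in> C"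
    using p by auto
  moreover have "\<forall>n f m gs. (n, f) \<in> C \<longrightarrow> length gs = n \<longrightarrow> (\<forall>g\<in>set gs. (m, g) \<in> C) \<longrightarrow>
        (\<exists>h. (m, h) \<in> C \<and> (\<forall>xs\<in>tuples A m. h xs = f (map (\<lambda>g. g xs) gs)))"
    using assms(1) by (simp add: clone_def)
  ultimately obtain h where "(m, h) \<in> C" "\<forall>xs\<in>tuples A m. h xs = f (map (\<lambda>g. g xs) (map p [0..<n]))"
    using assms(2) by blast
  moreover have "map (\<lambda>g. g xs) (map p [0..<n]) = map (\<lambda>i. xs ! \<sigma> i) [0..<n]" if "xs \<in> tuples A m" for xs
    using p that by simp
  ultimately show ?thesis unfolding minor_def by metis
qed

lemma identities_iff_minor:
  assumes "length L = n" "set L \<subseteq> {0, 1, 2}"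
  shows "(\<forall>v. (\<forall>i. v i \<in> A) \<longrightarrow> t (map v [0, 1, 2]) = s (map v L))
     \<longleftrightarrow> (\<forall>xs\<in>tuples A 3. t xs = minor n s ((!) L) xs)"
proof
  assume ids: "\<forall>v. (\<forall>i. v i \<in> A) \<longrightarrow> t (map v [0, 1, 2]) = s (map v L)"
  show "\<forall>xs\<in>tuples A 3. t xs = minor n s ((!) L) xs"
  proof
    fix xs assume "xs \<in> tuples A 3"
    then obtain a b c where xs: "xs = [a, b, c]" "a \<in> A" "b \<in> A" "c \<in> A"
      by (auto simp: tuples_def numeral_eq_Suc length_Suc_conv)
    define v where "v i = (if i = 0 then a else if i = 1 then b else c)" for i :: nat
    have "v j = xs ! j" if "j \<in> set L" for j
      using assms(2) that xs(1) by (auto simp: v_def)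
    then have "map v L = map (\<lambda>i. xs ! (L ! i)) [0..<n]"
      using assms(1) by (auto simp: list_eq_iff_nth_eq)
    moreover have "map v [0, 1, 2] = xs" "\<forall>i. v i \<in> A"
      using xs by (simp_all add: v_def)
    ultimately show "t xs = minor n s ((!) L) xs"
      using ids by (metis minor_def)
  qed
next
  assume minor: "\<forall>xs\<in>tuples A 3. t xs = minor n s ((!) L) xs"
  show "\<forall>v. (\<forall>i. v i \<in> A) \<longrightarrow> t (map v [0, 1, 2]) = s (map v L)"
  proof (intro allI impI)
    fix v :: "nat \<Rightarrow> _" assume "\<forall>i. v i \<in> A"
    then have "map v [0, 1, 2] \<in> tuples A 3" by (auto simp: tuples_def)
    moreover have "map v [0, 1, 2] ! j = v j" if "j \<in> set L" for j
      using assms(2) that by auto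
    then have "map (\<lambda>i. map v [0, 1, 2] ! (L ! i)) [0..<n] = map v L"
      using assms(1) by (auto simp: list_eq_iff_nth_eq)
    ultimately show "t (map v [0, 1, 2]) = s (map v L)"
      using minor by (simp add: minor_def)
  qed
qed

(* The argument lists of g_(u,v) in the two identities of Sigma_G. *)
definition src_pattern :: "nat list" where "src_pattern = [0, 1, 0, 2, 1, 2]"
definition tgt_pattern :: "nat list" where "tgt_pattern = [1, 0, 2, 0, 2, 1]"

lemma patterns_length: "length src_pattern = 6" "length tgt_pattern = 6"
  by (simp_all add: src_pattern_def tgt_pattern_def)

lemma patterns_set: "set src_pattern \<subseteq> {0, 1, 2}" "set tgt_pattern \<subseteq> {0, 1, 2}"
  by (simp_all add: src_pattern_def tgt_pattern_def)

lemma K3_E_eq_pattern_pairs: "K3_E = set (zip src_pattern tgt_pattern)"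
proof -
  have "K3_E = {(0, 1), (1, 0), (0, 2), (2, 0), (1, 2), (2, 1)}"
    unfolding K3_E_def K3_V_def by auto
  then show ?thesis by (simp add: src_pattern_def tgt_pattern_def)
qed

lemma patterns_K3_E: "j < 6 \<Longrightarrow> (src_pattern ! j, tgt_pattern ! j) \<in> K3_E"
  unfolding K3_E_eq_pattern_pairs using patterns_length by (simp add: in_set_zip) blast

lemma K3_E_in_patterns: "(p, q) \<in> K3_E \<Longrightarrow> \<exists>j<6. src_pattern ! j = p \<and> tgt_pattern ! j = q"
  unfolding K3_E_eq_pattern_pairs using patterns_length by (auto simp: in_set_zip)

definition ternary_link :: "'c set \<Rightarrow> 'c operation set \<Rightarrow> ('c list \<Rightarrow> 'c) \<Rightarrow> ('c list \<Rightarrow> 'c) \<Rightarrow> bool" where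
  "ternary_link A C t u \<longleftrightarrow> (\<exists>s. (6, s) \<in> C \<and> (\<forall>xs\<in>tuples A 3.
     t xs = minor 6 s ((!) src_pattern) xs \<and> u xs = minor 6 s ((!) tgt_pattern) xs))"

definition ternary_hom :: "'c set \<Rightarrow> 'c operation set \<Rightarrow> 'v set \<Rightarrow> ('v \<times> 'v) set \<Rightarrow> ('v \<Rightarrow> 'c list \<Rightarrow> 'c) \<Rightarrow> bool" where
  "ternary_hom A C V E T \<longleftrightarrow> (\<forall>v\<in>V. (3, T v) \<in> C) \<and> (\<forall>(u, v)\<in>E. ternary_link A C (T u) (T v))"

(* Each pair (a i, b i) is a column (src_pattern ! j, tgt_pattern ! j) of the patterns,
   so permuting the arguments of s accordingly yields the 6-ary witness. *)
lemma ternary_link_minors: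
  assumes "clone A C" "(6, s) \<in> C" "\<forall>i<6. (a i, b i) \<in> K3_E"
    and "\<forall>xs\<in>tuples A 3. t xs = minor 6 s a xs" "\<forall>xs\<in>tuples A 3. u xs = minor 6 s b xs"
  shows "ternary_link A C t u"
proof -
  have "\<forall>i<6. \<exists>j. j < 6 \<and> src_pattern ! j = a i \<and> tgt_pattern ! j = b i"
    using assms(3) K3_E_in_patterns by simp
  then obtain \<tau> where \<tau>: "\<forall>i<6. \<tau> i < 6 \<and> src_pattern ! \<tau> i = a i \<and> tgt_pattern ! \<tau> i = b i"
    by metis
  then have "\<forall>i<6. \<tau> i < 6" by blast
  then obtain s' where s': "(6, s') \<in> C" "\<forall>ys\<in>tuples A 6. s' ys = minor 6 s \<tau> ys"
    using clone_minor[OF assms(1,2)] by blast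
  have lt: "\<forall>j<6. src_pattern ! j < 3" "\<forall>j<6. tgt_pattern ! j < 3"
    using patterns_K3_E by (simp_all add: K3_E_iff)
  have "minor 6 s (((!) src_pattern) \<circ> \<tau>) = minor 6 s a" "minor 6 s (((!) tgt_pattern) \<circ> \<tau>) = minor 6 s b"
    by (rule minor_cong, use \<tau> in simp)+
  then have src: "t xs = minor 6 s' ((!) src_pattern) xs"
    and tgt: "u xs = minor 6 s' ((!) tgt_pattern) xs" if "xs \<in> tuples A 3" for xs
    using minor_of_minor_on_tuples[OF s'(2) \<open>\<forall>i<6. \<tau> i < 6\<close> lt(1) that]
      minor_of_minor_on_tuples[OF s'(2) \<open>\<forall>i<6. \<tau> i < 6\<close> lt(2) that] assms(4,5) that by simp_all
  show ?thesis
    unfolding ternary_link_def by (intro exI[of _ s'] conjI ballI s'(1) src tgt)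
qed

lemma ternary_link_iff_identities:
  "ternary_link A C t u \<longleftrightarrow> (\<exists>s. (6, s) \<in> C \<and> (\<forall>v. (\<forall>i. v i \<in> A) \<longrightarrow>
     t (map v [0, 1, 2]) = s (map v src_pattern) \<and> u (map v [0, 1, 2]) = s (map v tgt_pattern)))"
proof -
  have conv: "(\<forall>v. (\<forall>i. v i \<in> A) \<longrightarrow>
          t (map v [0, 1, 2]) = s (map v src_pattern) \<and> u (map v [0, 1, 2]) = s (map v tgt_pattern))
    \<longleftrightarrow> (\<forall>xs\<in>tuples A 3. t xs = minor 6 s ((!) src_pattern) xs \<and> u xs = minor 6 s ((!) tgt_pattern) xs)"
    for s
    using identities_iff_minor[OF patterns_length(1) patterns_set(1), of A t s]
      identities_iff_minor[OF patterns_length(2) patterns_set(2), of A u s]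
    by blast
  show ?thesis by (simp only: ternary_link_def conv)
qed

lemma ternary_hom_of_h1_sat:
  assumes "h1_sat A C (Sigma_graph V E)"
  shows "\<exists>T. ternary_hom A C V E T"
proof -
  obtain F where F: "\<forall>s\<in>Inl ` V \<union> Inr ` E. ((case s of Inl _ \<Rightarrow> 3 | Inr _ \<Rightarrow> 6), F s) \<in> C"
    and Fids: "\<forall>(s1, \<pi>, s2, \<rho>)\<in>{(Inl u, [0, 1, 2], Inr (u, v), src_pattern) | u v. (u, v) \<in> E} \<union>
      {(Inl v, [0, 1, 2], Inr (u, v), tgt_pattern) | u v. (u, v) \<in> E}.
        \<forall>v. (\<forall>i. v i \<in> A) \<longrightarrow> F s1 (map v \<pi>) = F s2 (map v \<rho>)"
    using assms unfolding h1_sat_def Sigma_graph_def src_pattern_def tgt_pattern_def by auto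
  have ids: "\<forall>v. (\<forall>i. v i \<in> A) \<longrightarrow>
       F (Inl u) (map v [0, 1, 2]) = F (Inr (u, w)) (map v src_pattern) \<and>
       F (Inl w) (map v [0, 1, 2]) = F (Inr (u, w)) (map v tgt_pattern)" if "(u, w) \<in> E" for u w
    using bspec[OF Fids, of "(Inl u, [0, 1, 2], Inr (u, w), src_pattern)"]
      bspec[OF Fids, of "(Inl w, [0, 1, 2], Inr (u, w), tgt_pattern)"] that
    by blast
  have "ternary_hom A C V E (F \<circ> Inl)"
    unfolding ternary_hom_def
  proof (intro conjI ballI)
    show "(3, (F \<circ> Inl) v) \<in> C" if "v \<in> V" for v
      using bspec[OF F, of "Inl v"] that by simp
    show "case e of (u, w) \<Rightarrow> ternary_link A C ((F \<circ> Inl) u) ((F \<circ> Inl) w)" if "e \<in> E" for e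
    proof -
      obtain u w where e: "e = (u, w)" by fastforce
      have "(6, F (Inr (u, w))) \<in> C"
        using bspec[OF F, of "Inr (u, w)"] that e by simp
      then show ?thesis
        unfolding e ternary_link_iff_identities using ids that e by auto
    qed
  qed
  then show ?thesis by blast
qed

lemma h1_sat_of_ternary_hom:
  assumes "ternary_hom A C V E T"
  shows "h1_sat A C (Sigma_graph V E)"
proof -
  from assms have TV: "\<forall>v\<in>V. (3, T v) \<in> C" and TE: "\<forall>(u, w)\<in>E. ternary_link A C (T u) (T w)"
    unfolding ternary_hom_def by blast+
  have "\<forall>e\<in>E. \<exists>s. (6, s) \<in> C \<and> (\<forall>v. (\<forall>i. v i \<in> A) \<longrightarrow>
     T (fst e) (map v [0, 1, 2]) = s (map v src_pattern) \<and> T (snd e) (map v [0, 1, 2]) = s (map v tgt_pattern))"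
    using TE unfolding ternary_link_iff_identities by fastforce
  then obtain S where S: "\<forall>e\<in>E. (6, S e) \<in> C \<and> (\<forall>v. (\<forall>i. v i \<in> A) \<longrightarrow>
     T (fst e) (map v [0, 1, 2]) = S e (map v src_pattern) \<and> T (snd e) (map v [0, 1, 2]) = S e (map v tgt_pattern))"
    by (rule bchoice[elim_format]) blast
  show ?thesis
    unfolding h1_sat_def Sigma_graph_def prod.case
    by (intro exI[of _ "case_sum T S"] conjI ballI)
      (use TV S in \<open>auto simp: src_pattern_def tgt_pattern_def\<close>)
qed

lemma h1_sat_Sigma_graph_iff:
  "h1_sat A C (Sigma_graph V E) \<longleftrightarrow> (\<exists>T. ternary_hom A C V E T)"
  using ternary_hom_of_h1_sat h1_sat_of_ternary_hom by blast

lemma ternary_hom_comp: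
  assumes "ternary_hom A C V' E' T" "\<phi> ` V \<subseteq> V'" "\<forall>(u, w)\<in>E. (\<phi> u, \<phi> w) \<in> E'"
  shows "ternary_hom A C V E (T \<circ> \<phi>)"
  using assms unfolding ternary_hom_def by fastforce

(* The six colourings form a homomorphism into the sixth power of K3, which
   a \<mapsto> minor 6 s a maps into the graph of ternary operations (ternary_link_minors). *)
lemma ternary_hom_patch:
  assumes cl: "clone A C" and s: "(6, s) \<in> C"
    and \<kappa>: "\<forall>i<6. hom_K3 V (E - P \<times> P) (\<kappa> i)"
    and T_vert: "\<forall>v\<in>V \<inter> P. (3, T v) \<in> C"
    and T_edge: "\<forall>(u, w)\<in>E \<inter> P \<times> P. ternary_link A C (T u) (T w)"
    and boundary: "\<forall>(u, w)\<in>E - P \<times> P. \<forall>v\<in>{u, w} \<inter> P.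
       \<forall>xs\<in>tuples A 3. T v xs = minor 6 s (\<lambda>i. \<kappa> i v) xs"
  shows "\<exists>T'. ternary_hom A C V E T'"
proof -
  define M where "M v = (SOME t. (3, t) \<in> C \<and> (\<forall>xs\<in>tuples A 3. t xs = minor 6 s (\<lambda>i. \<kappa> i v) xs))" for v
  have M: "(3, M v) \<in> C \<and> (\<forall>xs\<in>tuples A 3. M v xs = minor 6 s (\<lambda>i. \<kappa> i v) xs)"
    if "\<forall>i<6. \<kappa> i v < 3" for v
  proof -
    have "\<exists>t. (3, t) \<in> C \<and> (\<forall>xs\<in>tuples A 3. t xs = minor 6 s (\<lambda>i. \<kappa> i v) xs)"
      using clone_minor[OF cl s, of "\<lambda>i. \<kappa> i v" 3] that by simp
    then show ?thesis unfolding M_def by (rule someI_ex)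
  qed
  have \<kappa>_vert: "\<forall>i<6. \<kappa> i v < 3" if "v \<in> V" for v
    using \<kappa> that unfolding hom_K3_def graph_hom_def K3_V_iff by blast
  have \<kappa>_edge: "\<forall>i<6. (\<kappa> i u, \<kappa> i w) \<in> K3_E" if "(u, w) \<in> E - P \<times> P" for u w
    using \<kappa> that unfolding hom_K3_def graph_hom_def by blast
  define T' where "T' v = (if v \<in> P then T v else M v)" for v
  have "ternary_hom A C V E T'"
    unfolding ternary_hom_def
  proof (intro conjI ballI)
    show "(3, T' v) \<in> C" if "v \<in> V" for v
      using T_vert M[OF \<kappa>_vert[OF that]] that by (simp add: T'_def)
    show "case e of (u, w) \<Rightarrow> ternary_link A C (T' u) (T' w)" if "e \<in> E" for e
    proof -
      obtain u w where e: "e = (u, w)" by fastforce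
      show ?thesis
      proof (cases "u \<in> P \<and> w \<in> P")
        case True
        then have "(u, w) \<in> E \<inter> P \<times> P" using that e by blast
        then have "ternary_link A C (T u) (T w)" using T_edge by blast
        then show ?thesis using True e by (simp add: T'_def)
      next
        case False
        then have uw: "(u, w) \<in> E - P \<times> P" using that e by blast
        have agree: "\<forall>xs\<in>tuples A 3. T' v xs = minor 6 s (\<lambda>i. \<kappa> i v) xs" if "v \<in> {u, w}" for v
        proof (cases "v \<in> P")
          case True
          then show ?thesis using bspec[OF boundary uw] that by (simp add: T'_def)
        next
          case False
          have "\<forall>i<6. \<kappa> i v < 3"
            using \<kappa>_edge[OF uw] that unfolding K3_E_iff by blast
          then show ?thesis using M False by (simp add: T'_def)
        qed
        show ?thesis
          using ternary_link_minors[OF cl s \<kappa>_edge[OF uw] agree[of u] agree[of w]] e by simp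
      qed
    qed
  qed
  then show ?thesis by blast
qed

lemma hom_K3_mono: "hom_K3 V E c \<Longrightarrow> E' \<subseteq> E \<Longrightarrow> hom_K3 V E' c"
  unfolding hom_K3_def graph_hom_def by blast

lemma hom_K3_comp:
  assumes "hom_K3 V' E' c" "\<phi> ` V \<subseteq> V'" "\<forall>(u, w)\<in>E. (\<phi> u, \<phi> w) \<in> E'"
  shows "hom_K3 V E (c \<circ> \<phi>)"
  using assms unfolding hom_K3_def graph_hom_def by fastforce

lemma hom_K3_remove_edge_eq:
  assumes "hom_K3 V (remove_edge E u w) c" "\<not> three_colorable V E" "u \<in> V" "w \<in> V"
  shows "c u = c w"
proof (rule ccontr)
  assume "c u \<noteq> c w"
  with assms(1,3,4) have "hom_K3 V E c"
    unfolding hom_K3_def graph_hom_def remove_edge_def K3_E_def by auto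
  with assms(2) show False unfolding three_colorable_def by blast
qed

lemma critical_edge_ends:
  assumes "finite_loopless_graph V E" "critical_edge V E u w"
  shows "(u, w) \<in> E" "u \<in> V" "w \<in> V" "u \<noteq> w"
  using assms unfolding finite_loopless_graph_def critical_edge_def by auto

lemma critical_edge_coloring:
  assumes "finite_loopless_graph V E" "\<not> three_colorable V E" "critical_edge V E u w"
  obtains c where "hom_K3 V (remove_edge E u w) c" "c u = c w"
  using assms hom_K3_remove_edge_eq critical_edge_ends[OF assms(1,3)]
  unfolding critical_edge_def three_colorable_def by metis

lemma embN_simps:
  assumes "distinct [x, x', y, y']"
  shows "embN g g' h h' x x' y y' x = Inl g" "embN g g' h h' x x' y y' x' = Inl g'"
    "embN g g' h h' x x' y y' y = Inr (Inl h)" "embN g g' h h' x x' y y' y' = Inr (Inl h')"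
    "v \<notin> {x, x', y, y'} \<Longrightarrow> embN g g' h h' x x' y y' v = Inr (Inr v)"
  using assms by (auto simp: embN_def)

definition glue_col :: "('a \<Rightarrow> nat) \<Rightarrow> ('b \<Rightarrow> nat) \<Rightarrow> ('n \<Rightarrow> nat) \<Rightarrow> 'a + 'b + 'n \<Rightarrow> nat" where
  "glue_col cG cH cN w = (case w of Inl a \<Rightarrow> cG a | Inr (Inl b) \<Rightarrow> cH b | Inr (Inr v) \<Rightarrow> cN v)"

lemma glue_col_embN:
  assumes "distinct [x, x', y, y']" "cN x = cG g" "cN x' = cG g'" "cN y = cH h" "cN y' = cH h'"
  shows "glue_col cG cH cN (embN g g' h h' x x' y y' v) = cN v"
  using assms by (cases "v \<in> {x, x', y, y'}") (auto simp: embN_simps glue_col_def)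

lemma hom_K3_glue_col:
  assumes "hom_K3 VG (remove_edge EG g g') cG" "hom_K3 VH (remove_edge EH h h') cH" "hom_K3 VN EN cN"
    and "distinct [x, x', y, y']" "cN x = cG g" "cN x' = cG g'" "cN y = cH h" "cN y' = cH h'"
  shows "hom_K3 (glue_V VG VH VN g g' h h' x x' y y') (glue_E EG EH EN g g' h h' x x' y y')
           (glue_col cG cH cN)"
proof -
  have "glue_col cG cH cN (embN g g' h h' x x' y y' v) = cN v" for v
    by (rule glue_col_embN) (use assms in simp_all)
  with assms(1-3) show ?thesis
    unfolding hom_K3_def graph_hom_def glue_V_def glue_E_def by (auto simp: glue_col_def)
qed

lemma hom_K3_glue_restrict:
  assumes "hom_K3 (glue_V VG VH VN g g' h h' x x' y y') (glue_E EG EH EN g g' h h' x x' y y') c"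
  shows "hom_K3 VG (remove_edge EG g g') (c \<circ> Inl)"
    and "hom_K3 VH (remove_edge EH h h') (c \<circ> (\<lambda>b. Inr (Inl b)))"
    and "hom_K3 VN EN (c \<circ> embN g g' h h' x x' y y')"
  by (rule hom_K3_comp[OF assms]; force simp: glue_V_def glue_E_def)+

lemma remove_edge_glue_E_subset:
  "remove_edge (glue_E EG EH EN g g' h h' x x' y y') (embN g g' h h' x x' y y' d1) (embN g g' h h' x x' y y' d2)
     \<subseteq> glue_E EG EH (remove_edge EN d1 d2) g g' h h' x x' y y'"
  unfolding glue_E_def remove_edge_def by auto

lemma not_three_colorable_glue:
  assumes G: "finite_loopless_graph VG EG" "\<not> three_colorable VG EG" "critical_edge VG EG g g'"
    and H: "finite_loopless_graph VH EH" "\<not> three_colorable VH EH" "critical_edge VH EH h h'"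
    and dist: "distinct [x, x', y, y']"
    and N1: "\<forall>c. hom_K3 VN EN c \<longrightarrow> ((c x \<noteq> c x') \<noteq> (c y \<noteq> c y'))"
  shows "\<not> three_colorable (glue_V VG VH VN g g' h h' x x' y y') (glue_E EG EH EN g g' h h' x x' y y')"
proof
  assume "three_colorable (glue_V VG VH VN g g' h h' x x' y y') (glue_E EG EH EN g g' h h' x x' y y')"
  then obtain c where c: "hom_K3 (glue_V VG VH VN g g' h h' x x' y y') (glue_E EG EH EN g g' h h' x x' y y') c"
    unfolding three_colorable_def by blast
  have "c (Inl g) = c (Inl g')"
    using hom_K3_remove_edge_eq[OF hom_K3_glue_restrict(1)[OF c] G(2)] critical_edge_ends[OF G(1,3)]
    by simp
  moreover have "c (Inr (Inl h)) = c (Inr (Inl h'))"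
    using hom_K3_remove_edge_eq[OF hom_K3_glue_restrict(2)[OF c] H(2)] critical_edge_ends[OF H(1,3)]
    by simp
  ultimately show False
    using N1[rule_format, OF hom_K3_glue_restrict(3)[OF c]] by (simp add: embN_simps[OF dist])
qed

lemma critical_edge_glue:
  assumes G: "finite_loopless_graph VG EG" "\<not> three_colorable VG EG" "critical_edge VG EG g g'"
    and H: "finite_loopless_graph VH EH" "\<not> three_colorable VH EH" "critical_edge VH EH h h'"
    and dist: "distinct [x, x', y, y']" and d: "(d1, d2) \<in> EN"
    and N3: "\<forall>c. (\<forall>v\<in>{x, x', y, y'}. c v \<in> K3_V) \<longrightarrow> c x = c x' \<longrightarrow> c y = c y' \<longrightarrow>
               (\<exists>c'. hom_K3 VN (remove_edge EN d1 d2) c' \<and> (\<forall>v\<in>{x, x', y, y'}. c' v = c v))"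
  shows "critical_edge (glue_V VG VH VN g g' h h' x x' y y') (glue_E EG EH EN g g' h h' x x' y y')
           (embN g g' h h' x x' y y' d1) (embN g g' h h' x x' y y' d2)"
proof -
  obtain cG where cG: "hom_K3 VG (remove_edge EG g g') cG" "cG g = cG g'"
    using critical_edge_coloring[OF G] .
  obtain cH where cH: "hom_K3 VH (remove_edge EH h h') cH" "cH h = cH h'"
    using critical_edge_coloring[OF H] .
  define c where "c v = (if v \<in> {x, x'} then cG g else cH h)" for v
  have "\<forall>v\<in>{x, x', y, y'}. c v \<in> K3_V"
    using cG(1) cH(1) critical_edge_ends[OF G(1,3)] critical_edge_ends[OF H(1,3)]
    unfolding c_def hom_K3_def graph_hom_def by auto
  moreover have "c x = c x'" "c y = c y'"
    using dist by (auto simp: c_def)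
  ultimately obtain cN where cN: "hom_K3 VN (remove_edge EN d1 d2) cN" "\<forall>v\<in>{x, x', y, y'}. cN v = c v"
    using N3 by blast
  have "cN x = cG g" "cN x' = cG g'" "cN y = cH h" "cN y' = cH h'"
    using cN(2) cG(2) cH(2) dist by (auto simp: c_def)
  from hom_K3_glue_col[OF cG(1) cH(1) cN(1) dist this]
  have col: "hom_K3 (glue_V VG VH VN g g' h h' x x' y y') (glue_E EG EH (remove_edge EN d1 d2) g g' h h' x x' y y')
          (glue_col cG cH cN)" .
  have "three_colorable (glue_V VG VH VN g g' h h' x x' y y')
      (remove_edge (glue_E EG EH EN g g' h h' x x' y y') (embN g g' h h' x x' y y' d1) (embN g g' h h' x x' y y' d2))"
    using hom_K3_mono[OF col remove_edge_glue_E_subset] unfolding three_colorable_def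
    by (rule exI[where x = "glue_col cG cH cN"])
  moreover have "(embN g g' h h' x x' y y' d1, embN g g' h h' x x' y y' d2) \<in> glue_E EG EH EN g g' h h' x x' y y'"
    using d unfolding glue_E_def by (intro UnI2 image_eqI[where x = "(d1, d2)"]) simp_all
  ultimately show ?thesis unfolding critical_edge_def by blast
qed

lemma glue_V_Inl: "Inl a \<in> glue_V VG VH VN g g' h h' x x' y y' \<Longrightarrow> g \<in> VG \<Longrightarrow> g' \<in> VG \<Longrightarrow> a \<in> VG"
  by (auto simp: glue_V_def embN_def split: if_splits)

lemma glue_E_Inl:
  assumes "sym EG" "(g, g') \<in> EG" "\<forall>v. (v, v) \<notin> EN" "(Inl a, Inl b) \<in> glue_E EG EH EN g g' h h' x x' y y'"
  shows "(a, b) \<in> EG"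
  using assms unfolding glue_E_def remove_edge_def sym_def by (auto simp: embN_def split: if_splits)

lemma glue_E_boundary:
  assumes "(u, w) \<in> glue_E EG EH EN g g' h h' x x' y y'" "\<not> (u \<in> range Inl \<and> w \<in> range Inl)"
    and "v \<in> {u, w}" "v \<in> range Inl"
  shows "v = Inl g \<or> v = Inl g'"
  using assms unfolding glue_E_def by (auto simp: embN_def split: if_splits)

lemma glue_E_outside_left:
  "glue_E EG EH EN g g' h h' x x' y y' - range Inl \<times> range Inl \<subseteq> glue_E {} EH EN g g' h h' x x' y y'"
  unfolding glue_E_def remove_edge_def by auto

lemma pattern_colorings_of_extension:
  assumes dist: "distinct [x, x', y, y']" and N2: "\<forall>c. (\<forall>v\<in>{x, x', y, y'}. c v \<in> K3_V) \<longrightarrow>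
      ((c x \<noteq> c x') \<noteq> (c y \<noteq> c y')) \<longrightarrow> (\<exists>c'. hom_K3 VN EN c' \<and> (\<forall>v\<in>{x, x', y, y'}. c' v = c v))"
    and "k < 3"
  shows "\<exists>cN. \<forall>i<6. hom_K3 VN EN (cN i) \<and> cN i x = src_pattern ! i \<and>
      cN i x' = tgt_pattern ! i \<and> cN i y = k \<and> cN i y' = k"
proof -
  have "\<exists>c. hom_K3 VN EN c \<and> c x = src_pattern ! i \<and> c x' = tgt_pattern ! i \<and> c y = k \<and> c y' = k"
    if "i < 6" for i
  proof -
    define c0 where "c0 v = (if v = x then src_pattern ! i else if v = x' then tgt_pattern ! i else k)" for v
    have "\<forall>v\<in>{x, x', y, y'}. c0 v \<in> K3_V" "(c0 x \<noteq> c0 x') \<noteq> (c0 y \<noteq> c0 y')"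
      using patterns_K3_E[OF that] assms(3) dist by (auto simp: c0_def K3_E_iff K3_V_iff)
    then obtain c where "hom_K3 VN EN c" "\<forall>v\<in>{x, x', y, y'}. c v = c0 v"
      using N2[rule_format, of c0] by blast
    then show ?thesis using dist by (auto simp: c0_def)
  qed
  then have ex: "\<forall>i. \<exists>c. i < 6 \<longrightarrow> hom_K3 VN EN c \<and> c x = src_pattern ! i \<and>
      c x' = tgt_pattern ! i \<and> c y = k \<and> c y' = k"
    by blast
  show ?thesis using choice[OF ex] by blast
qed

(* W maps to G glued with the sixth power of K3 along (g, g') = (src_pattern, tgt_pattern):
   G is kept, H - f is coloured by cH in every coordinate, and N coordinatewise by (N2). *)
lemma ternary_hom_glue_left:
  assumes cl: "clone A C" and TG: "ternary_hom A C VG EG TG"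
    and G: "finite_loopless_graph VG EG" "(g, g') \<in> EG"
    and cH: "hom_K3 VH (remove_edge EH h h') cH" "cH h = cH h'" "h \<in> VH"
    and N: "finite_loopless_graph VN EN" and dist: "distinct [x, x', y, y']"
    and N2: "\<forall>c. (\<forall>v\<in>{x, x', y, y'}. c v \<in> K3_V) \<longrightarrow> ((c x \<noteq> c x') \<noteq> (c y \<noteq> c y')) \<longrightarrow>
               (\<exists>c'. hom_K3 VN EN c' \<and> (\<forall>v\<in>{x, x', y, y'}. c' v = c v))"
  shows "\<exists>T. ternary_hom A C (glue_V VG VH VN g g' h h' x x' y y') (glue_E EG EH EN g g' h h' x x' y y') T"
proof -
  let ?VW = "glue_V VG VH VN g g' h h' x x' y y'" and ?EW = "glue_E EG EH EN g g' h h' x x' y y'"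
  have gg: "g \<in> VG" "g' \<in> VG" "g \<noteq> g'" "sym EG"
    using G unfolding finite_loopless_graph_def by auto
  have "ternary_link A C (TG g) (TG g')"
    using TG G(2) unfolding ternary_hom_def by blast
  then obtain s where s: "(6, s) \<in> C" and sg: "\<forall>xs\<in>tuples A 3.
      TG g xs = minor 6 s ((!) src_pattern) xs \<and> TG g' xs = minor 6 s ((!) tgt_pattern) xs"
    unfolding ternary_link_def by blast
  have cHh: "cH h < 3"
    using cH(1,3) unfolding hom_K3_def graph_hom_def K3_V_iff by blast
  obtain cN where cN: "\<forall>i<6. hom_K3 VN EN (cN i) \<and> cN i x = src_pattern ! i \<and>
      cN i x' = tgt_pattern ! i \<and> cN i y = cH h \<and> cN i y' = cH h"
    using pattern_colorings_of_extension[OF dist N2 cHh] by blast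
  define \<kappa> where "\<kappa> i = glue_col (\<lambda>a. if a = g then src_pattern ! i else tgt_pattern ! i) cH (cN i)" for i
  have \<kappa>_hom: "hom_K3 ?VW (glue_E {} EH EN g g' h h' x x' y y') (\<kappa> i)" if "i < 6" for i
    unfolding \<kappa>_def
  proof (rule hom_K3_glue_col[OF _ cH(1) _ dist])
    show "hom_K3 VG (remove_edge {} g g') (\<lambda>a. if a = g then src_pattern ! i else tgt_pattern ! i)"
      using patterns_K3_E[OF that] by (simp add: hom_K3_def graph_hom_def remove_edge_def K3_E_def)
  qed (use cN[rule_format, OF that] gg(3) cH(2) in simp_all)
  have \<kappa>_Inl: "\<kappa> i (Inl g) = src_pattern ! i" "\<kappa> i (Inl g') = tgt_pattern ! i" for i
    using gg(3) by (simp_all add: \<kappa>_def glue_col_def)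
  show ?thesis
  proof (rule ternary_hom_patch[OF cl s, where P = "range Inl" and T = "TG \<circ> projl" and \<kappa> = \<kappa>])
    show "\<forall>i<6. hom_K3 ?VW (?EW - range Inl \<times> range Inl) (\<kappa> i)"
      using hom_K3_mono[OF \<kappa>_hom glue_E_outside_left] by blast
    show "\<forall>v\<in>?VW \<inter> range Inl. (3, (TG \<circ> projl) v) \<in> C"
    proof clarify
      fix a assume "Inl a \<in> ?VW"
      then have "a \<in> VG" using glue_V_Inl gg(1,2) by metis
      then show "(3, (TG \<circ> projl) (Inl a)) \<in> C" using TG unfolding ternary_hom_def by simp
    qed
    have loopless: "\<forall>v. (v, v) \<notin> EN" using N unfolding finite_loopless_graph_def by blast
    show "\<forall>(u, w)\<in>?EW \<inter> range Inl \<times> range Inl. ternary_link A C ((TG \<circ> projl) u) ((TG \<circ> projl) w)"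
    proof clarify
      fix a b assume "(Inl a, Inl b) \<in> ?EW"
      then have "(a, b) \<in> EG" using glue_E_Inl[OF gg(4) G(2) loopless] by metis
      then show "ternary_link A C ((TG \<circ> projl) (Inl a)) ((TG \<circ> projl) (Inl b))"
        using TG unfolding ternary_hom_def by auto
    qed
    have "(TG \<circ> projl) v xs = minor 6 s (\<lambda>i. \<kappa> i v) xs"
      if "(u, w) \<in> ?EW - range Inl \<times> range Inl" "v \<in> {u, w} \<inter> range Inl" "xs \<in> tuples A 3" for u w v xs
    proof -
      have "v = Inl g \<or> v = Inl g'"
        using that(1,2) by (intro glue_E_boundary[of u w]) auto
      then show ?thesis using sg that(3) \<kappa>_Inl by auto
    qed
    then show "\<forall>(u, w)\<in>?EW - range Inl \<times> range Inl. \<forall>v\<in>{u, w} \<inter> range Inl.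
       \<forall>xs\<in>tuples A 3. (TG \<circ> projl) v xs = minor 6 s (\<lambda>i. \<kappa> i v) xs"
      by blast
  qed
qed

definition glue_swap :: "'a + 'b + 'n \<Rightarrow> 'b + 'a + 'n" where
  "glue_swap w = (case w of Inl a \<Rightarrow> Inr (Inl a) | Inr (Inl b) \<Rightarrow> Inl b | Inr (Inr v) \<Rightarrow> Inr (Inr v))"

lemma glue_swap_embN:
  "distinct [x, x', y, y'] \<Longrightarrow> glue_swap (embN g g' h h' x x' y y' v) = embN h h' g g' y y' x x' v"
  by (auto simp: embN_def glue_swap_def)

lemma glue_swap_V:
  "distinct [x, x', y, y'] \<Longrightarrow>
     glue_swap ` glue_V VG VH VN g g' h h' x x' y y' \<subseteq> glue_V VH VG VN h h' g g' y y' x x'"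
  unfolding glue_V_def by (auto simp: glue_swap_embN) (auto simp: glue_swap_def)

lemma glue_swap_E:
  "distinct [x, x', y, y'] \<Longrightarrow> \<forall>(u, w)\<in>glue_E EG EH EN g g' h h' x x' y y'.
     (glue_swap u, glue_swap w) \<in> glue_E EH EG EN h h' g g' y y' x x'"
  unfolding glue_E_def by (auto simp: glue_swap_embN) (auto simp: glue_swap_def)

lemma ternary_hom_glue_right:
  assumes cl: "clone A C" and TH: "ternary_hom A C VH EH TH"
    and H: "finite_loopless_graph VH EH" "(h, h') \<in> EH"
    and cG: "hom_K3 VG (remove_edge EG g g') cG" "cG g = cG g'" "g \<in> VG"
    and N: "finite_loopless_graph VN EN" and dist: "distinct [x, x', y, y']"
    and N2: "\<forall>c. (\<forall>v\<in>{x, x', y, y'}. c v \<in> K3_V) \<longrightarrow> ((c x \<noteq> c x') \<noteq> (c y \<noteq> c y')) \<longrightarrow>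
               (\<exists>c'. hom_K3 VN EN c' \<and> (\<forall>v\<in>{x, x', y, y'}. c' v = c v))"
  shows "\<exists>T. ternary_hom A C (glue_V VG VH VN g g' h h' x x' y y') (glue_E EG EH EN g g' h h' x x' y y') T"
proof -
  have "{y, y', x, x'} = {x, x', y, y'}" by blast
  then have N2': "\<forall>c. (\<forall>v\<in>{y, y', x, x'}. c v \<in> K3_V) \<longrightarrow> ((c y \<noteq> c y') \<noteq> (c x \<noteq> c x')) \<longrightarrow>
               (\<exists>c'. hom_K3 VN EN c' \<and> (\<forall>v\<in>{y, y', x, x'}. c' v = c v))"
    using N2 by metis
  have "distinct [y, y', x, x']" using dist by auto
  then obtain T where "ternary_hom A C (glue_V VH VG VN h h' g g' y y' x x') (glue_E EH EG EN h h' g g' y y' x x') T"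
    using ternary_hom_glue_left[OF cl TH H cG N _ N2'] by blast
  then have "ternary_hom A C (glue_V VG VH VN g g' h h' x x' y y') (glue_E EG EH EN g g' h h' x x' y y')
      (T \<circ> glue_swap)"
    using glue_swap_V[OF dist] glue_swap_E[OF dist] by (rule ternary_hom_comp)
  then show ?thesis by blast
qed

theorem lemmaA1:
  fixes VG :: "'a set" and EG :: "('a \<times> 'a) set" and g g' :: 'a
    and VH :: "'b set" and EH :: "('b \<times> 'b) set" and h h' :: 'b
    and VN :: "'n set" and EN :: "('n \<times> 'n) set" and x x' y y' d1 d2 :: 'n
  assumes G: "finite_loopless_graph VG EG" "\<not> three_colorable VG EG"
    and H: "finite_loopless_graph VH EH" "\<not> three_colorable VH EH"
    and e: "critical_edge VG EG g g'"
    and f: "critical_edge VH EH h h'"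
    and N: "finite_loopless_graph VN EN"
    and Nverts: "x \<in> VN" "x' \<in> VN" "y \<in> VN" "y' \<in> VN"
    and Ndist: "distinct [x, x', y, y']"
    and Nnon: "(x, x') \<notin> EN" "(y, y') \<notin> EN"
    and d: "(d1, d2) \<in> EN"
    and N1: "\<forall>c. hom_K3 VN EN c \<longrightarrow> ((c x \<noteq> c x') \<noteq> (c y \<noteq> c y'))"
    and N2: "\<forall>c. (\<forall>v\<in>{x, x', y, y'}. c v \<in> K3_V) \<longrightarrow> ((c x \<noteq> c x') \<noteq> (c y \<noteq> c y')) \<longrightarrow>
               (\<exists>c'. hom_K3 VN EN c' \<and> (\<forall>v\<in>{x, x', y, y'}. c' v = c v))"
    and N3: "\<forall>c. (\<forall>v\<in>{x, x', y, y'}. c v \<in> K3_V) \<longrightarrow> c x = c x' \<longrightarrow> c y = c y' \<longrightarrow>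
               (\<exists>c'. hom_K3 VN (remove_edge EN d1 d2) c' \<and> (\<forall>v\<in>{x, x', y, y'}. c' v = c v))"
  defines "VW \<equiv> glue_V VG VH VN g g' h h' x x' y y'"
    and "EW \<equiv> glue_E EG EH EN g g' h h' x x' y y'"
  shows "\<not> three_colorable VW EW \<and>
         critical_edge VW EW (embN g g' h h' x x' y y' d1) (embN g g' h h' x x' y y' d2) \<and>
         h1_implies TYPE('c) (Sigma_graph VG EG) (Sigma_graph VW EW) \<and>
         h1_implies TYPE('c) (Sigma_graph VH EH) (Sigma_graph VW EW)"
proof (intro conjI)
  show "\<not> three_colorable VW EW"
    unfolding VW_def EW_def using not_three_colorable_glue[OF G e H f Ndist N1] .
  show "critical_edge VW EW (embN g g' h h' x x' y y' d1) (embN g g' h h' x x' y y' d2)"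
    unfolding VW_def EW_def using critical_edge_glue[OF G e H f Ndist d N3] .
  obtain cG where cG: "hom_K3 VG (remove_edge EG g g') cG" "cG g = cG g'"
    using critical_edge_coloring[OF G e] .
  obtain cH where cH: "hom_K3 VH (remove_edge EH h h') cH" "cH h = cH h'"
    using critical_edge_coloring[OF H f] .
  show "h1_implies TYPE('c) (Sigma_graph VG EG) (Sigma_graph VW EW)"
    unfolding h1_implies_def h1_sat_Sigma_graph_iff VW_def EW_def
    using ternary_hom_glue_left[OF _ _ G(1) critical_edge_ends(1)[OF G(1) e] cH
        critical_edge_ends(2)[OF H(1) f] N Ndist N2] by blast
  show "h1_implies TYPE('c) (Sigma_graph VH EH) (Sigma_graph VW EW)"
    unfolding h1_implies_def h1_sat_Sigma_graph_iff VW_def EW_def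
    using ternary_hom_glue_right[OF _ _ H(1) critical_edge_ends(1)[OF H(1) f] cG
        critical_edge_ends(2)[OF G(1) e] N Ndist N2] by blast
qed

end
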